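(* Let $T,s,k\in\mathbb{N}$ and let $w\in\{0,1\}^T$ be a random variable satisfying the $\epsilon$-martingale condition. Then \[ \Pr_w\bigl[\text{there is a decomposition } w=xyz \text{ with } |x|=s-1,\ |y|\ge k, \text{ such that } \mu_x(y)\ge0\bigr]\le O(1)\cdot\exp(-\Omega(k)). \]
   Context: Characteristic strings and forks. A characteristic string is $w=w_1\dots w_n\in\{0,1\}^n$; index $i$ is honest if $w_i=0$ and adversarial if $w_i=1$. A fork for $w$ is a rooted tree with edges directed away from the root $r$ and labeling $\ell:V\to\{0,\dots,n\}$ with (F1) $\ell(r)=0$; (F2) labels strictly increasing along directed paths; (F3) each honest index labels exactly one vertex; (F4) for honest $i<j$ the vertex labeled $i$ has strictly smaller depth than the vertex labeled $j$. Write $F\vdash w$. A vertex is honest if it is the root or labeled by an honest index. A tine is a directed path from the root; its length is its number of edges, $\ell(t)$ the label of its last vertex. A fork is closed if every leaf is honest; a closed fork has a unique longest tine $\hat t$. For closed $F\vdash w$ and tine $t$: $\mathrm{gap}(t)=\mathrm{length}(\hat t)-\mathrm{length}(t)$, $\mathrm{reserve}(t)=|\{i:w_i=1,\ i>\ell(t)\}|$, $\mathrm{reach}(t)=\mathrm{reserve}(t)-\mathrm{gap}(t)$. For $w=xy$, tines are disjoint over $y$ if they share no edge terminating at a vertex with label $>|x|$ (a tine may be paired with itself). $\mu_x(F)=\max\min\{\mathrm{reach}(t_1),\mathrm{reach}(t_2)\}$ over pairs disjoint over $y$, and $\mu_x(y)=\max\{\mu_x(F):F\vdash xy\text{ closed}\}$.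 A random variable $W\in\{0,1\}^n$ satisfies the $\epsilon$-martingale condition ($\epsilon\in(0,1)$) if for every $t$, $\Pr[W_t=1\mid W_1,\dots,W_{t-1}]\le(1-\epsilon)/2$. The asymptotic constants may depend on $\epsilon$. *)

theory Defs
  imports "HOL-Probability.Probability"
begin

text \<open>A characteristic string w = w_1 ... w_n is a bool list; w_i = 1 (adversarial)
  is encoded as True, w_i = 0 (honest) as False. Indices are 1-based: w_i = w ! (i - 1).\<close>

definition honest_idx :: "bool list \<Rightarrow> nat \<Rightarrow> bool" where
  "honest_idx w i \<longleftrightarrow> 1 \<le> i \<and> i \<le> length w \<and> \<not> w ! (i - 1)"

definition adv_idx :: "bool list \<Rightarrow> nat \<Rightarrow> bool" where
  "adv_idx w i \<longleftrightarrow> 1 \<le> i \<and> i \<le> length w \<and> w ! (i - 1)"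

text \<open>A rooted tree on a finite vertex set of naturals, given by a root and a parent map;
  the edges are (par v, v) for v \<noteq> root, directed away from the root.\<close>

record fork =
  verts :: "nat set"
  rt    :: nat
  par   :: "nat \<Rightarrow> nat"
  lab   :: "nat \<Rightarrow> nat"

definition is_rooted_tree :: "fork \<Rightarrow> bool" where
  "is_rooted_tree F \<longleftrightarrow> finite (verts F) \<and> rt F \<in> verts F \<and>
     (\<forall>v\<in>verts F. v \<noteq> rt F \<longrightarrow> par F v \<in> verts F) \<and>
     (\<forall>v\<in>verts F. \<exists>m. (par F ^^ m) v = rt F)"

definition depth :: "fork \<Rightarrow> nat \<Rightarrow> nat" where
  "depth F v = (LEAST m. (par F ^^ m) v = rt F)"

definition tine_verts :: "fork \<Rightarrow> nat \<Rightarrow> nat set" where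
  "tine_verts F v = {(par F ^^ i) v | i. i \<le> depth F v}"

definition is_fork :: "bool list \<Rightarrow> fork \<Rightarrow> bool" where
  "is_fork w F \<longleftrightarrow> is_rooted_tree F \<and>
     (\<forall>v\<in>verts F. lab F v \<le> length w) \<and>
     \<comment> \<open>(F1)\<close>
     lab F (rt F) = 0 \<and>
     \<comment> \<open>(F2) labels strictly increase along directed paths\<close>
     (\<forall>v\<in>verts F. \<forall>i. 0 < i \<and> i \<le> depth F v \<longrightarrow> lab F ((par F ^^ i) v) < lab F v) \<and>
     \<comment> \<open>(F3)\<close>
     (\<forall>i. honest_idx w i \<longrightarrow> card {v \<in> verts F. lab F v = i} = 1) \<and>
     \<comment> \<open>(F4)\<close>
     (\<forall>i j u v. honest_idx w i \<and> honest_idx w j \<and> i < j \<and> u \<in> verts F \<and> v \<in> verts F \<and>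
        lab F u = i \<and> lab F v = j \<longrightarrow> depth F u < depth F v)"

definition honest_vertex :: "bool list \<Rightarrow> fork \<Rightarrow> nat \<Rightarrow> bool" where
  "honest_vertex w F v \<longleftrightarrow> v = rt F \<or> honest_idx w (lab F v)"

definition is_leaf :: "fork \<Rightarrow> nat \<Rightarrow> bool" where
  "is_leaf F v \<longleftrightarrow> v \<in> verts F \<and> \<not> (\<exists>u\<in>verts F. u \<noteq> rt F \<and> par F u = v)"

definition closed_fork :: "bool list \<Rightarrow> fork \<Rightarrow> bool" where
  "closed_fork w F \<longleftrightarrow> (\<forall>v. is_leaf F v \<longrightarrow> honest_vertex w F v)"

text \<open>Tines are identified with their terminal vertex; length(t) = depth, \<ell>(t) = label.
  height F = length of the longest tine.\<close>
definition height :: "fork \<Rightarrow> nat" where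
  "height F = Max (depth F ` verts F)"

definition gap :: "fork \<Rightarrow> nat \<Rightarrow> int" where
  "gap F v = int (height F) - int (depth F v)"

definition reserve :: "bool list \<Rightarrow> fork \<Rightarrow> nat \<Rightarrow> int" where
  "reserve w F v = int (card {i. adv_idx w i \<and> i > lab F v})"

definition reach :: "bool list \<Rightarrow> fork \<Rightarrow> nat \<Rightarrow> int" where
  "reach w F v = reserve w F v - gap F v"

text \<open>Tines ending at v1, v2 are disjoint over y (w = xy, m = |x|): they share no edge
  terminating at a vertex with label > m. The edge terminating at u is (par u, u), u \<noteq> root.\<close>
definition disjoint_over :: "fork \<Rightarrow> nat \<Rightarrow> nat \<Rightarrow> nat \<Rightarrow> bool" where
  "disjoint_over F m v1 v2 \<longleftrightarrow>
     (\<forall>u \<in> tine_verts F v1 \<inter> tine_verts F v2. u \<noteq> rt F \<longrightarrow> lab F u \<le> m)"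

definition mu_fork :: "bool list \<Rightarrow> bool list \<Rightarrow> fork \<Rightarrow> int" where
  "mu_fork x y F = Max {min (reach (x @ y) F v1) (reach (x @ y) F v2) | v1 v2.
      v1 \<in> verts F \<and> v2 \<in> verts F \<and> disjoint_over F (length x) v1 v2}"

definition mu :: "bool list \<Rightarrow> bool list \<Rightarrow> int" where
  "mu x y = Sup {mu_fork x y F | F. is_fork (x @ y) F \<and> closed_fork (x @ y) F}"

text \<open>For each position t (0-based; W_{t+1} in the paper)
  and each prefix p of length t:  Pr[W_{t+1} = 1 \<and> prefix = p] \<le> (1-\<epsilon>)/2 \<cdot> Pr[prefix = p],
  i.e. Pr[W_{t+1} = 1 | W_1..W_t] \<le> (1-\<epsilon>)/2 almost surely.\<close>
definition eps_martingale :: "real \<Rightarrow> nat \<Rightarrow> bool list pmf \<Rightarrow> bool" where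
  "eps_martingale eps T W \<longleftrightarrow> set_pmf W \<subseteq> {w. length w = T} \<and>
     (\<forall>t<T. \<forall>p. measure_pmf.prob W {w. take t w = p \<and> w ! t}
                 \<le> (1 - eps) / 2 * measure_pmf.prob W {w. take t w = p})"

end

theory Submission
  imports Defs
begin

text \<open>The relative margin is bounded by the recursion of the paper: \<open>\<mu>\<^sub>x(\<epsilon>) = \<rho>(x)\<close>,
  an adversarial slot raises the margin by one, and an honest slot lowers it by one unless it is
  \<open>0\<close> while the reach \<open>\<rho>(xy)\<close> is positive. This follows by induction on \<open>y\<close>, pulling every
  pair of disjoint tines back to the fork restricted to the shorter string.

  For the probability, the state \<open>(r, m) = (\<rho>(xy), \<mu>\<^sub>x(y))\<close> is weighed by the potential
  \<open>\<Phi>(r, m) = a^m b^(r - m)\<close> for \<open>m \<ge> 0\<close> and \<open>v^(-m) b^(r - m)\<close> for \<open>m < 0\<close>, where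
  \<open>a, b > 1 > v\<close>. Under the \<open>\<epsilon>\<close>-martingale condition its expectation shrinks by the factor
  \<open>\<theta> = 1 - \<epsilon>^3/8\<close> in every slot, and \<open>\<Phi> \<ge> 1\<close> whenever \<open>m \<ge> 0\<close>. Starting from
  \<open>E a^\<rho>(x) \<le> 1/(1 - \<theta>)\<close>, Markov's inequality gives \<open>Pr[\<mu>\<^sub>x(y) \<ge> 0] \<le> \<theta>^|y|/(1 - \<theta>)\<close>,
  and a union bound over \<open>|y| \<ge> k\<close> gives \<open>\<theta>^k/(1 - \<theta>)^2\<close>.\<close>

section \<open>Rooted trees and forks\<close>

lemma depth_le: "(par G ^^ m) v = rt G \<Longrightarrow> depth G v \<le> m"
  unfolding depth_def by (rule Least_le)

lemma depth_rt [simp]: "depth G (rt G) = 0"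
  using depth_le[where m = 0] by simp

lemma rooted_tree_reaches_rt: "is_rooted_tree G \<Longrightarrow> v \<in> verts G \<Longrightarrow> \<exists>m. (par G ^^ m) v = rt G"
  unfolding is_rooted_tree_def by blast

lemma rooted_tree_par_in_verts:
  "is_rooted_tree G \<Longrightarrow> v \<in> verts G \<Longrightarrow> v \<noteq> rt G \<Longrightarrow> par G v \<in> verts G"
  unfolding is_rooted_tree_def by blast

lemma rooted_tree_funpow_depth:
  "is_rooted_tree G \<Longrightarrow> v \<in> verts G \<Longrightarrow> (par G ^^ depth G v) v = rt G"
  unfolding depth_def by (rule LeastI_ex) (rule rooted_tree_reaches_rt)

lemma rooted_tree_depth_par:
  assumes T: "is_rooted_tree G" and v: "v \<in> verts G" and nr: "v \<noteq> rt G"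
  shows "depth G v = Suc (depth G (par G v))"
proof -
  have pv: "par G v \<in> verts G" using rooted_tree_par_in_verts[OF T v nr] .
  obtain d where d: "depth G v = Suc d"
    using rooted_tree_funpow_depth[OF T v] nr by (cases "depth G v") auto
  have "(par G ^^ d) (par G v) = rt G"
    using rooted_tree_funpow_depth[OF T v] by (simp add: d funpow_Suc_right del: funpow.simps)
  then have "depth G (par G v) \<le> d" by (rule depth_le)
  moreover have "(par G ^^ Suc (depth G (par G v))) v = rt G"
    using rooted_tree_funpow_depth[OF T pv] by (simp add: funpow_Suc_right del: funpow.simps)
  then have "depth G v \<le> Suc (depth G (par G v))" by (rule depth_le)
  ultimately show ?thesis using d by simp
qed

lemma tine_verts_self: "v \<in> tine_verts G v"
  unfolding tine_verts_def by force

lemma tine_verts_rt [simp]: "tine_verts G (rt G) = {rt G}"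
  unfolding tine_verts_def by simp

lemma rooted_tree_tine_verts_par:
  assumes T: "is_rooted_tree G" and v: "v \<in> verts G" and nr: "v \<noteq> rt G"
  shows "tine_verts G (par G v) \<subseteq> tine_verts G v"
proof
  fix u assume "u \<in> tine_verts G (par G v)"
  then obtain i where "u = (par G ^^ Suc i) v" and "Suc i \<le> depth G v"
    unfolding tine_verts_def rooted_tree_depth_par[OF T v nr]
    by (auto simp: funpow_Suc_right simp del: funpow.simps)
  then show "u \<in> tine_verts G v" unfolding tine_verts_def by blast
qed

lemma disjoint_over_mono:
  "disjoint_over G m v1 v2 \<Longrightarrow> tine_verts G u1 \<subseteq> tine_verts G v1 \<Longrightarrow>
   tine_verts G u2 \<subseteq> tine_verts G v2 \<Longrightarrow> disjoint_over G m u1 u2"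
  unfolding disjoint_over_def by blast

lemma honest_idx_le_length: "honest_idx w i \<Longrightarrow> i \<le> length w"
  unfolding honest_idx_def by simp

lemma honest_idx_snoc: "i \<le> length w \<Longrightarrow> honest_idx (w @ [b]) i \<longleftrightarrow> honest_idx w i"
  unfolding honest_idx_def by (auto simp: nth_append)

lemma honest_idx_snoc_True: "honest_idx (w @ [True]) i \<longleftrightarrow> honest_idx w i"
  unfolding honest_idx_def by (auto simp: nth_append)

lemma honest_idx_snoc_False: "honest_idx (w @ [False]) i \<longleftrightarrow> honest_idx w i \<or> i = Suc (length w)"
  unfolding honest_idx_def by (auto simp: nth_append)

lemma adv_idx_snoc_True: "adv_idx (w @ [True]) i \<longleftrightarrow> adv_idx w i \<or> i = Suc (length w)"
  unfolding adv_idx_def by (auto simp: nth_append)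

lemma adv_idx_snoc_False: "adv_idx (w @ [False]) i \<longleftrightarrow> adv_idx w i"
  unfolding adv_idx_def by (auto simp: nth_append)

lemma is_fork_rooted_tree: "is_fork w G \<Longrightarrow> is_rooted_tree G"
  unfolding is_fork_def by blast

lemma fork_lab_rt: "is_fork w G \<Longrightarrow> lab G (rt G) = 0"
  unfolding is_fork_def by blast

lemma fork_lab_le_length: "is_fork w G \<Longrightarrow> v \<in> verts G \<Longrightarrow> lab G v \<le> length w"
  unfolding is_fork_def by blast

lemma fork_lab_par_less:
  assumes F: "is_fork w G" and v: "v \<in> verts G" and nr: "v \<noteq> rt G"
  shows "lab G (par G v) < lab G v"
proof -
  have "1 \<le> depth G v"
    using rooted_tree_depth_par[OF is_fork_rooted_tree[OF F] v nr] by simp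
  then have "lab G ((par G ^^ 1) v) < lab G v" using F v unfolding is_fork_def by blast
  then show ?thesis by simp
qed

lemma fork_honest_label_ex1:
  assumes "is_fork w G" and "honest_idx w i"
  shows "\<exists>!v. v \<in> verts G \<and> lab G v = i"
proof -
  obtain z where "{v \<in> verts G. lab G v = i} = {z}"
    using assms unfolding is_fork_def by (auto simp: card_1_singleton_iff)
  then show ?thesis by (metis (mono_tags, lifting) mem_Collect_eq singletonD singletonI)
qed

lemma fork_depth_less:
  "is_fork w G \<Longrightarrow> honest_idx w i \<Longrightarrow> honest_idx w j \<Longrightarrow> i < j \<Longrightarrow>
   u \<in> verts G \<Longrightarrow> v \<in> verts G \<Longrightarrow> lab G u = i \<Longrightarrow> lab G v = j \<Longrightarrow> depth G u < depth G v"
  unfolding is_fork_def by blast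

definition restrict_fork :: "fork \<Rightarrow> nat \<Rightarrow> fork" where
  "restrict_fork G n = G\<lparr>verts := {v \<in> verts G. lab G v \<le> n}\<rparr>"

lemma restrict_fork_simps [simp]:
  "verts (restrict_fork G n) = {v \<in> verts G. lab G v \<le> n}"
  "rt (restrict_fork G n) = rt G" "par (restrict_fork G n) = par G"
  "lab (restrict_fork G n) = lab G"
  unfolding restrict_fork_def by simp_all

lemma depth_restrict_fork [simp]: "depth (restrict_fork G n) = depth G"
  unfolding depth_def by simp

lemma tine_verts_restrict_fork [simp]: "tine_verts (restrict_fork G n) = tine_verts G"
  unfolding tine_verts_def by (simp add: fun_eq_iff)

lemma disjoint_over_restrict_fork [simp]: "disjoint_over (restrict_fork G n) = disjoint_over G"
  unfolding disjoint_over_def by (simp add: fun_eq_iff)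

lemma reserve_restrict_fork [simp]: "reserve w (restrict_fork G n) = reserve w G"
  unfolding reserve_def by (simp add: fun_eq_iff)

lemma is_fork_restrict_fork:
  assumes F: "is_fork (w @ [b]) G"
  shows "is_fork w (restrict_fork G (length w))"
proof -
  let ?G = "restrict_fork G (length w)"
  have T: "is_rooted_tree G" using is_fork_rooted_tree[OF F] .
  have honest: "honest_idx (w @ [b]) i" if "honest_idx w i" for i
    using that honest_idx_snoc[OF honest_idx_le_length] by blast
  have tree: "is_rooted_tree ?G"
    unfolding is_rooted_tree_def
  proof (intro conjI ballI impI)
    show "finite (verts ?G)" "rt ?G \<in> verts ?G"
      using T fork_lab_rt[OF F] unfolding is_rooted_tree_def by auto
    show "par ?G v \<in> verts ?G" if "v \<in> verts ?G" "v \<noteq> rt ?G" for v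
      using that rooted_tree_par_in_verts[OF T] fork_lab_par_less[OF F] by fastforce
    show "\<exists>m. (par ?G ^^ m) v = rt ?G" if "v \<in> verts ?G" for v
      using that rooted_tree_reaches_rt[OF T] by simp
  qed
  have increasing:
    "\<forall>v\<in>verts ?G. \<forall>i. 0 < i \<and> i \<le> depth ?G v \<longrightarrow> lab ?G ((par ?G ^^ i) v) < lab ?G v"
    using F unfolding is_fork_def by simp
  have unique: "\<forall>i. honest_idx w i \<longrightarrow> card {v \<in> verts ?G. lab ?G v = i} = 1"
  proof (intro allI impI)
    fix i assume i: "honest_idx w i"
    then have "{v \<in> verts ?G. lab ?G v = i} = {v \<in> verts G. lab G v = i}"
      using honest_idx_le_length by auto
    then show "card {v \<in> verts ?G. lab ?G v = i} = 1" using F honest[OF i] unfolding is_fork_def by simp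
  qed
  have deeper: "\<forall>i j u v. honest_idx w i \<and> honest_idx w j \<and> i < j \<and> u \<in> verts ?G \<and> v \<in> verts ?G \<and>
      lab ?G u = i \<and> lab ?G v = j \<longrightarrow> depth ?G u < depth ?G v"
    using fork_depth_less[OF F honest honest] by (simp only: restrict_fork_simps depth_restrict_fork) blast
  show ?thesis
    unfolding is_fork_def using fork_lab_rt[OF F] by (intro conjI tree increasing unique deeper) simp_all
qed

text \<open>The restriction of a closed fork to a prefix of the string need not be closed, so gaps are
  measured against the deepest honest vertex; for closed forks this is the height.\<close>

definition honest_height :: "bool list \<Rightarrow> fork \<Rightarrow> nat" where
  "honest_height w G = Max (depth G ` {v \<in> verts G. honest_vertex w G v})"

definition honest_reach :: "bool list \<Rightarrow> fork \<Rightarrow> nat \<Rightarrow> int" where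
  "honest_reach w G v = reserve w G v - (int (honest_height w G) - int (depth G v))"

lemma fork_honest_verts_finite_nonempty:
  assumes "is_fork w G"
  shows "finite {v \<in> verts G. honest_vertex w G v}" and "rt G \<in> {v \<in> verts G. honest_vertex w G v}"
  using is_fork_rooted_tree[OF assms] unfolding is_rooted_tree_def honest_vertex_def by auto

lemma honest_height_ge:
  "is_fork w G \<Longrightarrow> v \<in> verts G \<Longrightarrow> honest_vertex w G v \<Longrightarrow> depth G v \<le> honest_height w G"
  unfolding honest_height_def using fork_honest_verts_finite_nonempty by (intro Max_ge) auto

lemma honest_height_attained:
  assumes "is_fork w G"
  obtains v where "v \<in> verts G" "honest_vertex w G v" "honest_height w G = depth G v"
proof -
  have "honest_height w G \<in> depth G ` {v \<in> verts G. honest_vertex w G v}"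
    unfolding honest_height_def using fork_honest_verts_finite_nonempty[OF assms]
    by (intro Max_in) auto
  then show ?thesis using that by auto
qed

lemma honest_height_snoc_True:
  assumes "is_fork (w @ [True]) G"
  shows "honest_height (w @ [True]) G = honest_height w (restrict_fork G (length w))"
proof -
  have "{v \<in> verts G. honest_vertex (w @ [True]) G v} =
        {v \<in> verts (restrict_fork G (length w)). honest_vertex w (restrict_fork G (length w)) v}"
    using fork_lab_rt[OF assms] honest_idx_le_length
    by (auto simp: honest_vertex_def honest_idx_snoc_True)
  then show ?thesis unfolding honest_height_def by simp
qed

lemma fork_depth_less_new_honest:
  assumes F: "is_fork (w @ [False]) G" and v: "v \<in> verts G" "lab G v = Suc (length w)"
    and u: "u \<in> verts G" "honest_vertex (w @ [False]) G u" "lab G u \<le> length w"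
  shows "depth G u < depth G v"
proof (cases "u = rt G")
  case True
  have "v \<noteq> rt G" using fork_lab_rt[OF F] v by auto
  then show ?thesis using True rooted_tree_depth_par[OF is_fork_rooted_tree[OF F] v(1)] by simp
next
  case False
  then have "honest_idx (w @ [False]) (lab G u)" using u(2) unfolding honest_vertex_def by simp
  moreover have "honest_idx (w @ [False]) (lab G v)" using v(2) by (simp add: honest_idx_snoc_False)
  ultimately show ?thesis using fork_depth_less[OF F _ _ _ u(1) v(1)] u(3) v(2) by simp
qed

lemma honest_height_snoc_False:
  assumes F: "is_fork (w @ [False]) G" and v: "v \<in> verts G" and lv: "lab G v = Suc (length w)"
  shows "honest_height (w @ [False]) G = depth G v"
    and "honest_height w (restrict_fork G (length w)) < depth G v"
proof -
  have hv: "honest_idx (w @ [False]) (lab G v)" using lv by (simp add: honest_idx_snoc_False)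
  obtain u where u: "u \<in> verts G" "honest_vertex (w @ [False]) G u"
    "honest_height (w @ [False]) G = depth G u"
    using honest_height_attained[OF F] .
  have "u = v" if "\<not> lab G u \<le> length w"
  proof -
    have "lab G u = lab G v" using fork_lab_le_length[OF F u(1)] that lv by simp
    then show ?thesis using fork_honest_label_ex1[OF F hv] u(1) v by blast
  qed
  then have "honest_height (w @ [False]) G \<le> depth G v"
    using fork_depth_less_new_honest[OF F v lv u(1,2)] u(3) by (cases "lab G u \<le> length w") auto
  moreover have "depth G v \<le> honest_height (w @ [False]) G"
    using honest_height_ge[OF F v] hv unfolding honest_vertex_def by simp
  ultimately show "honest_height (w @ [False]) G = depth G v" by simp
  obtain u' where u': "u' \<in> verts G" "lab G u' \<le> length w" "honest_vertex w G u'"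
    "honest_height w (restrict_fork G (length w)) = depth G u'"
    using honest_height_attained[OF is_fork_restrict_fork[OF F]] unfolding honest_vertex_def by auto
  have "honest_vertex (w @ [False]) G u'"
    using u'(3) unfolding honest_vertex_def by (auto simp: honest_idx_snoc_False)
  then show "honest_height w (restrict_fork G (length w)) < depth G v"
    using fork_depth_less_new_honest[OF F v lv u'(1) _ u'(2)] u'(4) by simp
qed

lemma honest_height_snoc_False_less:
  assumes F: "is_fork (w @ [False]) G"
  shows "honest_height w (restrict_fork G (length w)) < honest_height (w @ [False]) G"
proof -
  have "honest_idx (w @ [False]) (Suc (length w))" by (simp add: honest_idx_snoc_False)
  then obtain v where "v \<in> verts G" "lab G v = Suc (length w)"
    using fork_honest_label_ex1[OF F] by blast
  then show ?thesis using honest_height_snoc_False[OF F] by simp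
qed

lemma reserve_nonneg: "0 \<le> reserve w G v"
  unfolding reserve_def by simp

lemma reserve_snoc_False: "reserve (w @ [False]) G v = reserve w G v"
  unfolding reserve_def by (simp add: adv_idx_snoc_False)

lemma reserve_snoc_True:
  assumes "lab G v \<le> length w"
  shows "reserve (w @ [True]) G v = reserve w G v + 1"
proof -
  have fin: "finite {i. adv_idx w i \<and> lab G v < i}"
    by (rule finite_subset[of _ "{..length w}"]) (auto simp: adv_idx_def)
  have "{i. adv_idx (w @ [True]) i \<and> lab G v < i} = insert (Suc (length w)) {i. adv_idx w i \<and> lab G v < i}"
    using assms by (auto simp: adv_idx_snoc_True)
  moreover have "Suc (length w) \<notin> {i. adv_idx w i \<and> lab G v < i}" by (auto simp: adv_idx_def)
  ultimately show ?thesis unfolding reserve_def using fin by simp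
qed

lemma reserve_eq_0: "length w \<le> lab G v \<Longrightarrow> reserve w G v = 0"
  unfolding reserve_def adv_idx_def by auto

section \<open>The margin recursion bounds the relative margin\<close>

text \<open>The recursions of the paper for the maximal reach \<open>\<rho>(w)\<close> and the relative margin
  \<open>\<mu>\<^sub>x(y)\<close>; here only the inequalities \<open>reach \<le> rho\<close> and \<open>mu \<le> margin\<close> are needed.\<close>

definition rho_step :: "int \<Rightarrow> bool \<Rightarrow> int" where
  "rho_step r b = (if b then r + 1 else max 0 (r - 1))"

definition rho :: "bool list \<Rightarrow> int" where
  "rho w = foldl rho_step 0 w"

fun margin_step :: "int \<times> int \<Rightarrow> bool \<Rightarrow> int \<times> int" where
  "margin_step (r, m) b = (rho_step r b, if b then m + 1 else if m = 0 \<and> 1 \<le> r then 0 else m - 1)"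

definition margin_state :: "bool list \<Rightarrow> bool list \<Rightarrow> int \<times> int" where
  "margin_state x y = foldl margin_step (rho x, rho x) y"

definition margin :: "bool list \<Rightarrow> bool list \<Rightarrow> int" where
  "margin x y = snd (margin_state x y)"

lemma rho_Nil [simp]: "rho [] = 0"
  by (simp add: rho_def)

lemma rho_snoc [simp]: "rho (w @ [b]) = rho_step (rho w) b"
  by (simp add: rho_def)

lemma rho_nonneg: "0 \<le> rho w"
  by (induction w rule: rev_induct) (auto simp: rho_step_def)

lemma margin_state_snoc: "margin_state x (y @ [b]) = margin_step (margin_state x y) b"
  by (simp add: margin_state_def)

lemma fst_margin_step: "fst (margin_step s b) = rho_step (fst s) b"
  by (cases s) simp

lemma margin_state_eq: "margin_state x y = (rho (x @ y), margin x y)"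
  unfolding margin_def
  by (induction y rule: rev_induct)
     (simp_all add: margin_state_snoc prod_eq_iff fst_margin_step flip: append_assoc,
      simp add: margin_state_def)

lemma margin_Nil [simp]: "margin x [] = rho x"
  by (simp add: margin_def margin_state_def)

lemma margin_snoc: "margin x (y @ [b]) = snd (margin_step (rho (x @ y), margin x y) b)"
  by (metis margin_def margin_state_eq margin_state_snoc)

lemma margin_le_rho: "margin x y \<le> rho (x @ y)"
  by (induction y rule: rev_induct)
     (auto simp: margin_snoc rho_step_def rho_nonneg simp flip: append_assoc)

lemma honest_reach_snoc_True:
  assumes F: "is_fork (w @ [True]) G" and v: "v \<in> verts G"
  obtains v' where "v' \<in> verts (restrict_fork G (length w))" "tine_verts G v' \<subseteq> tine_verts G v"
    "honest_reach (w @ [True]) G v \<le> honest_reach w (restrict_fork G (length w)) v' + 1"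
proof (cases "lab G v \<le> length w")
  case True
  then have "honest_reach (w @ [True]) G v = honest_reach w (restrict_fork G (length w)) v + 1"
    using honest_height_snoc_True[OF F] reserve_snoc_True unfolding honest_reach_def by simp
  then show ?thesis using that v True by simp
next
  case False
  have T: "is_rooted_tree G" using is_fork_rooted_tree[OF F] .
  have nr: "v \<noteq> rt G" using False fork_lab_rt[OF F] by auto
  have "honest_reach (w @ [True]) G v \<le> honest_reach w (restrict_fork G (length w)) (par G v) + 1"
    using honest_height_snoc_True[OF F] rooted_tree_depth_par[OF T v nr] False
      reserve_eq_0[of "w @ [True]"] reserve_nonneg[of w G "par G v"]
    unfolding honest_reach_def by simp
  moreover have "par G v \<in> verts (restrict_fork G (length w))"
    using rooted_tree_par_in_verts[OF T v nr] fork_lab_par_less[OF F v nr]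
      fork_lab_le_length[OF F v] by simp
  ultimately show ?thesis using that rooted_tree_tine_verts_par[OF T v nr] by blast
qed

lemma honest_reach_snoc_False:
  assumes F: "is_fork (w @ [False]) G" and v: "v \<in> verts G"
  obtains u where "u \<in> verts (restrict_fork G (length w))" "tine_verts G u \<subseteq> tine_verts G v"
    "honest_reach (w @ [False]) G v \<le> honest_reach w (restrict_fork G (length w)) u - 1 \<or>
     lab G v = Suc (length w) \<and> honest_reach (w @ [False]) G v \<le> 0 \<and>
     0 \<le> honest_reach w (restrict_fork G (length w)) u"
proof (cases "lab G v \<le> length w")
  case True
  then show ?thesis
    using that[of v] v honest_height_snoc_False_less[OF F] reserve_snoc_False[of w G v]
    unfolding honest_reach_def by simp
next
  case False
  have T: "is_rooted_tree G" using is_fork_rooted_tree[OF F] .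
  have lv: "lab G v = Suc (length w)" using False fork_lab_le_length[OF F v] by simp
  have nr: "v \<noteq> rt G" using lv fork_lab_rt[OF F] by auto
  have "par G v \<in> verts (restrict_fork G (length w))"
    using rooted_tree_par_in_verts[OF T v nr] fork_lab_par_less[OF F v nr] lv by simp
  moreover have "honest_reach (w @ [False]) G v \<le> 0"
    using honest_height_snoc_False(1)[OF F v lv] reserve_eq_0[of "w @ [False]"] lv
    unfolding honest_reach_def by simp
  moreover have "0 \<le> honest_reach w (restrict_fork G (length w)) (par G v)"
    using honest_height_snoc_False(2)[OF F v lv] rooted_tree_depth_par[OF T v nr]
      reserve_nonneg[of w G "par G v"]
    unfolding honest_reach_def by simp
  ultimately show ?thesis using that[of "par G v"] lv rooted_tree_tine_verts_par[OF T v nr] by blast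
qed

lemma honest_reach_le_rho: "is_fork w G \<Longrightarrow> v \<in> verts G \<Longrightarrow> honest_reach w G v \<le> rho w"
proof (induction w arbitrary: G v rule: rev_induct)
  case Nil
  have "lab G v = 0" using fork_lab_le_length[OF Nil.prems] by simp
  then have "v = rt G" using fork_lab_par_less[OF Nil.prems] by (metis not_less0)
  then show ?case using honest_height_ge[OF Nil.prems(1), of "rt G"] Nil.prems reserve_eq_0[of "[]"]
    unfolding honest_reach_def honest_vertex_def by simp
next
  case (snoc b w)
  let ?G = "restrict_fork G (length w)"
  have IH: "honest_reach w ?G u \<le> rho w" if "u \<in> verts ?G" for u
    using snoc.IH[OF is_fork_restrict_fork[OF snoc.prems(1)] that] .
  show ?case
  proof (cases b)
    case True
    have F: "is_fork (w @ [True]) G" using snoc.prems(1) True by simp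
    obtain u where "u \<in> verts ?G" "honest_reach (w @ [True]) G v \<le> honest_reach w ?G u + 1"
      using honest_reach_snoc_True[OF F snoc.prems(2)] by blast
    then show ?thesis using IH True by (fastforce simp: rho_step_def)
  next
    case False
    have F: "is_fork (w @ [False]) G" using snoc.prems(1) False by simp
    obtain u where "u \<in> verts ?G"
      "honest_reach (w @ [False]) G v \<le> honest_reach w ?G u - 1 \<or> honest_reach (w @ [False]) G v \<le> 0"
      using honest_reach_snoc_False[OF F snoc.prems(2)] by blast
    then show ?thesis using IH[of u] False by (auto simp: rho_step_def)
  qed
qed

lemma disjoint_over_same_honest_label:
  assumes F: "is_fork w G" and "honest_idx w i" "m < i"
    and "v1 \<in> verts G" "v2 \<in> verts G" "lab G v1 = i" "lab G v2 = i"
  shows "\<not> disjoint_over G m v1 v2"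
proof -
  have "v1 = v2" using fork_honest_label_ex1[OF F \<open>honest_idx w i\<close>] assms(4-7) by blast
  moreover have "v1 \<noteq> rt G" using fork_lab_rt[OF F] assms(3,6) by auto
  ultimately show ?thesis using tine_verts_self[of v1 G] assms(3,6) unfolding disjoint_over_def by auto
qed

text \<open>In an honest slot each of the two reaches drops by one, except that the reach of the new
  honest vertex is \<open>0\<close>; disjointness rules out that both tines end there.\<close>

lemma min_le_margin_step_False:
  fixes a1 a2 t1 t2 m r :: int
  assumes "min t1 t2 \<le> m" "t1 \<le> r" "t2 \<le> r"
    and "a1 \<le> t1 - 1 \<or> a1 \<le> 0 \<and> 0 \<le> t1" "a2 \<le> t2 - 1 \<or> a2 \<le> 0 \<and> 0 \<le> t2"
    and "a1 \<le> t1 - 1 \<or> a2 \<le> t2 - 1"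
  shows "min a1 a2 \<le> snd (margin_step (r, m) False)"
  using assms by auto

lemma min_honest_reach_le_margin:
  "is_fork (x @ y) G \<Longrightarrow> v1 \<in> verts G \<Longrightarrow> v2 \<in> verts G \<Longrightarrow> disjoint_over G (length x) v1 v2 \<Longrightarrow>
   min (honest_reach (x @ y) G v1) (honest_reach (x @ y) G v2) \<le> margin x y"
proof (induction y arbitrary: G v1 v2 rule: rev_induct)
  case Nil
  then show ?case using honest_reach_le_rho[of x G v1] by simp
next
  case (snoc b y)
  let ?w = "x @ y"
  let ?G = "restrict_fork G (length ?w)"
  have F: "is_fork (?w @ [b]) G" using snoc.prems(1) by simp
  let ?r' = "honest_reach ?w ?G"
  have IH: "min (?r' u1) (?r' u2) \<le> margin x y"
    if "u1 \<in> verts ?G" "u2 \<in> verts ?G"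
      "tine_verts G u1 \<subseteq> tine_verts G v1" "tine_verts G u2 \<subseteq> tine_verts G v2" for u1 u2
    using snoc.IH[OF is_fork_restrict_fork[OF F] that(1,2)]
      disjoint_over_mono[OF snoc.prems(4) that(3,4)] by simp
  show ?case
  proof (cases b)
    case True
    have F1: "is_fork (?w @ [True]) G" using F True by simp
    let ?r = "honest_reach (?w @ [True]) G"
    obtain u1 where u1: "u1 \<in> verts ?G" "tine_verts G u1 \<subseteq> tine_verts G v1" "?r v1 \<le> ?r' u1 + 1"
      using honest_reach_snoc_True[OF F1 snoc.prems(2)] by blast
    obtain u2 where u2: "u2 \<in> verts ?G" "tine_verts G u2 \<subseteq> tine_verts G v2" "?r v2 \<le> ?r' u2 + 1"
      using honest_reach_snoc_True[OF F1 snoc.prems(3)] by blast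
    show ?thesis using IH[OF u1(1) u2(1) u1(2) u2(2)] u1(3) u2(3) True by (auto simp: margin_snoc)
  next
    case False
    have F0: "is_fork (?w @ [False]) G" using F False by simp
    let ?r = "honest_reach (?w @ [False]) G"
    obtain u1 where u1: "u1 \<in> verts ?G" "tine_verts G u1 \<subseteq> tine_verts G v1"
        "?r v1 \<le> ?r' u1 - 1 \<or> lab G v1 = Suc (length ?w) \<and> ?r v1 \<le> 0 \<and> 0 \<le> ?r' u1"
      using honest_reach_snoc_False[OF F0 snoc.prems(2)] by blast
    obtain u2 where u2: "u2 \<in> verts ?G" "tine_verts G u2 \<subseteq> tine_verts G v2"
        "?r v2 \<le> ?r' u2 - 1 \<or> lab G v2 = Suc (length ?w) \<and> ?r v2 \<le> 0 \<and> 0 \<le> ?r' u2"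
      using honest_reach_snoc_False[OF F0 snoc.prems(3)] by blast
    have "honest_idx (?w @ [False]) (Suc (length ?w))" using honest_idx_snoc_False[of ?w] by blast
    then have "?r v1 \<le> ?r' u1 - 1 \<or> ?r v2 \<le> ?r' u2 - 1"
      using disjoint_over_same_honest_label[OF F0 _ _ snoc.prems(2,3)] snoc.prems(4) u1(3) u2(3)
      by force
    then have "min (?r v1) (?r v2) \<le> snd (margin_step (rho ?w, margin x y) False)"
      using min_le_margin_step_False[OF IH[OF u1(1) u2(1) u1(2) u2(2)]] u1(3) u2(3)
        honest_reach_le_rho[OF is_fork_restrict_fork[OF F0] u1(1)]
        honest_reach_le_rho[OF is_fork_restrict_fork[OF F0] u2(1)]
      by blast
    then show ?thesis using False by (simp add: margin_snoc)
  qed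
qed

lemma closed_fork_height_eq_honest_height:
  assumes F: "is_fork w G" and C: "closed_fork w G"
  shows "height G = honest_height w G"
proof -
  have T: "is_rooted_tree G" using is_fork_rooted_tree[OF F] .
  have fin: "finite (verts G)" and rt: "rt G \<in> verts G" using T unfolding is_rooted_tree_def by auto
  have "honest_height w G \<le> height G"
    unfolding honest_height_def height_def
    using fin fork_honest_verts_finite_nonempty[OF F] by (intro Max_mono) auto
  moreover have "height G \<in> depth G ` verts G"
    unfolding height_def using fin rt by (intro Max_in) auto
  then obtain v where v: "v \<in> verts G" "height G = depth G v" by auto
  have "is_leaf G v"
  proof (rule ccontr)
    assume "\<not> is_leaf G v"
    then obtain u where u: "u \<in> verts G" "u \<noteq> rt G" "par G u = v"
      using v unfolding is_leaf_def by auto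
    have "depth G u \<le> height G" unfolding height_def using fin u(1) by (intro Max_ge) auto
    then show False using rooted_tree_depth_par[OF T u(1,2)] u(3) v(2) by simp
  qed
  then have "height G \<le> honest_height w G"
    using C honest_height_ge[OF F v(1)] v(2) unfolding closed_fork_def by simp
  ultimately show ?thesis by simp
qed

lemma closed_fork_reach_eq_honest_reach:
  "is_fork w G \<Longrightarrow> closed_fork w G \<Longrightarrow> reach w G v = honest_reach w G v"
  unfolding reach_def honest_reach_def gap_def
  using closed_fork_height_eq_honest_height by simp

lemma mu_fork_le_margin:
  assumes F: "is_fork (x @ y) G" and C: "closed_fork (x @ y) G"
  shows "mu_fork x y G \<le> margin x y"
proof -
  let ?M = "{min (reach (x @ y) G v1) (reach (x @ y) G v2) | v1 v2.
      v1 \<in> verts G \<and> v2 \<in> verts G \<and> disjoint_over G (length x) v1 v2}"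
  have fin: "finite (verts G)" and rt: "rt G \<in> verts G"
    using is_fork_rooted_tree[OF F] unfolding is_rooted_tree_def by auto
  have "?M \<subseteq> (\<lambda>(v1, v2). min (reach (x @ y) G v1) (reach (x @ y) G v2)) ` (verts G \<times> verts G)"
    by force
  moreover have "finite (verts G \<times> verts G)" using fin by simp
  ultimately have "finite ?M" by (meson finite_imageI finite_subset)
  moreover have "disjoint_over G (length x) (rt G) (rt G)" unfolding disjoint_over_def by simp
  then have "?M \<noteq> {}" using rt by blast
  moreover have "\<forall>a \<in> ?M. a \<le> margin x y"
    using min_honest_reach_le_margin[OF F] closed_fork_reach_eq_honest_reach[OF F C] by auto
  ultimately show ?thesis unfolding mu_fork_def by simp
qed

text \<open>A path through all honest slots. It shows that the supremum defining \<open>mu\<close> is taken over a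
  nonempty set; the supremum of the empty set of integers is a junk value.\<close>

definition chain_fork :: "bool list \<Rightarrow> fork" where
  "chain_fork w =
     \<lparr>verts = {0..Max (insert 0 {i. honest_idx w i})}, rt = 0, par = (\<lambda>v. v - 1), lab = id\<rparr>"

lemma chain_fork_simps [simp]:
  "verts (chain_fork w) = {0..Max (insert 0 {i. honest_idx w i})}"
  "rt (chain_fork w) = 0" "lab (chain_fork w) = id" "par (chain_fork w) v = v - 1"
  by (simp_all add: chain_fork_def)

lemma funpow_par_chain_fork [simp]: "(par (chain_fork w) ^^ m) v = v - m"
  by (induction m) simp_all

lemma depth_chain_fork [simp]: "depth (chain_fork w) v = v"
  unfolding depth_def by (rule Least_equality) auto

lemma chain_fork_is_closed_fork: "is_fork w (chain_fork w)" "closed_fork w (chain_fork w)"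
proof -
  let ?H = "insert 0 {i. honest_idx w i}"
  let ?F = "chain_fork w"
  have fin: "finite ?H" by (rule finite_subset[of _ "{..length w}"]) (auto simp: honest_idx_def)
  have top: "Max ?H \<le> length w" "Max ?H \<in> ?H" "honest_idx w i \<Longrightarrow> i \<le> Max ?H" for i
    using fin honest_idx_le_length Max_in[OF fin] by auto
  have "(par ?F ^^ v) v = rt ?F" for v by simp
  then have "is_rooted_tree ?F"
    unfolding is_rooted_tree_def by auto
  moreover have "card {v \<in> verts ?F. lab ?F v = i} = 1" if "honest_idx w i" for i
  proof -
    have "{v \<in> verts ?F. lab ?F v = i} = {i}" using top(3)[OF that] by auto
    then show ?thesis by simp
  qed
  ultimately show "is_fork w ?F"
    unfolding is_fork_def using top(1) by auto
  have "honest_vertex w ?F v" if "is_leaf ?F v" for v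
  proof -
    have "v \<le> Max ?H" using that unfolding is_leaf_def by simp
    moreover have "\<not> v < Max ?H"
    proof
      assume "v < Max ?H"
      then have "Suc v \<in> verts ?F \<and> Suc v \<noteq> rt ?F \<and> par ?F (Suc v) = v"
        by simp
      then show False using that unfolding is_leaf_def by blast
    qed
    ultimately have "v = Max ?H" by simp
    then show ?thesis using top(2) unfolding honest_vertex_def by auto
  qed
  then show "closed_fork w ?F" unfolding closed_fork_def by blast
qed

lemma mu_le_margin: "mu x y \<le> margin x y"
  unfolding mu_def
proof (rule cSup_least)
  show "{mu_fork x y F | F. is_fork (x @ y) F \<and> closed_fork (x @ y) F} \<noteq> {}"
    using chain_fork_is_closed_fork[of "x @ y"] by blast
qed (use mu_fork_le_margin in blast)

section \<open>A potential that contracts under the martingale condition\<close>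

text \<open>\<open>coin_mean_le q x1 x0 y\<close> says that \<open>p x1 + (1 - p) x0 \<le> y\<close> for every \<open>p \<in> [0, q]\<close>, i.e. for
  every coin whose probability of showing \<open>1\<close> is at most \<open>q\<close>.\<close>

definition coin_mean_le :: "real \<Rightarrow> real \<Rightarrow> real \<Rightarrow> real \<Rightarrow> bool" where
  "coin_mean_le q x1 x0 y \<longleftrightarrow> q * x1 + (1 - q) * x0 \<le> y \<and> x0 \<le> y"

lemma coin_mean_le_scale:
  assumes "coin_mean_le q x1 x0 y" and "0 \<le> c"
  shows "coin_mean_le q (x1 * c) (x0 * c) (y * c)"
proof -
  have "(q * x1 + (1 - q) * x0) * c \<le> y * c" and "x0 * c \<le> y * c"
    using assms unfolding coin_mean_le_def by (auto intro: mult_right_mono)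
  then show ?thesis unfolding coin_mean_le_def by (simp add: algebra_simps)
qed

lemma coin_mean_le_weighted:
  assumes "coin_mean_le q x1 x0 y" and "0 \<le> p1" "0 \<le> p0" "p1 \<le> q * (p1 + p0)"
  shows "x1 * p1 + x0 * p0 \<le> y * (p1 + p0)"
proof (cases "x0 \<le> x1")
  case True
  have "(x1 - x0) * p1 \<le> (x1 - x0) * (q * (p1 + p0))"
    using assms True by (intro mult_left_mono) auto
  then have "x1 * p1 + x0 * p0 \<le> (p1 + p0) * (q * x1 + (1 - q) * x0)" by (simp add: algebra_simps)
  also have "\<dots> \<le> (p1 + p0) * y"
    using assms unfolding coin_mean_le_def by (intro mult_left_mono) auto
  finally show ?thesis by (simp add: algebra_simps)
next
  case False
  have "x1 * p1 \<le> x0 * p1" using assms False by (intro mult_right_mono) auto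
  moreover have "x0 * (p1 + p0) \<le> y * (p1 + p0)"
    using assms unfolding coin_mean_le_def by (intro mult_right_mono) auto
  ultimately show ?thesis by (simp add: algebra_simps)
qed

text \<open>The constants are tuned so that the five inequalities below hold for \<open>0 < e \<le> 1/2\<close>; each is
  proved by writing the slack as a power of \<open>e\<close> times a polynomial that is positive on that range.\<close>

locale margin_potential =
  fixes e :: real
  assumes e_pos: "0 < e" and e_le_half: "e \<le> 1/2"
begin

definition "q = (1 - e) / 2"
definition "a = 1 + e^2 / 6"
definition "b = 1 + e^2 / 2"
definition "v = 1 / (1 + e)"
definition "theta = 1 - e^3 / 8"

lemma e_powers: "0 \<le> e^2" "e^2 \<le> 1/4" "0 \<le> e^3" "e^3 \<le> 1/8"
proof -
  have "e^2 \<le> (1/2)^2" "e^3 \<le> (1/2)^3" using e_pos e_le_half by (intro power_mono; simp)+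
  then show "e^2 \<le> 1/4" "e^3 \<le> 1/8" by (simp_all add: power2_eq_square power3_eq_cube)
qed (use e_pos in simp_all)

lemma constants_bounds:
  "0 \<le> q" "q \<le> 1" "1 \<le> a" "1 \<le> b" "0 < v" "0 < theta" "theta < 1" "a \<le> 1 + theta"
  using e_pos e_le_half e_powers unfolding q_def a_def b_def v_def theta_def by auto

lemma coin_positive_margin: "coin_mean_le q (a^2) 1 (theta * a)"
proof -
  have "theta * a - (q * a^2 + (1 - q) * 1) = e^3 * (1/24 - e/72 - e^2/144)"
    "theta * a - 1 = e^2 * (1/6 - e/8 - e^3/48)"
    by (simp_all add: q_def a_def theta_def field_simps power2_eq_square power3_eq_cube)
  moreover have "0 \<le> 1/24 - e/72 - e^2/144" "0 \<le> 1/6 - e/8 - e^3/48"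
    using e_le_half e_powers by simp_all
  ultimately show ?thesis unfolding coin_mean_le_def using e_powers
    by (smt (verit) mult_nonneg_nonneg)
qed

lemma coin_zero_margin: "coin_mean_le q (a * b) 1 (theta * b)"
proof -
  have "theta * b - (q * (a * b) + (1 - q) * 1) = e^2 * (1/6 + 5*e/24 - e^2/24 - e^3/48)"
    "theta * b - 1 = e^2 * (1/2 - e/8 - e^3/16)"
    by (simp_all add: q_def a_def b_def theta_def field_simps power2_eq_square power3_eq_cube)
  moreover have "0 \<le> 1/6 + 5*e/24 - e^2/24 - e^3/48" "0 \<le> 1/2 - e/8 - e^3/16"
    using e_pos e_le_half e_powers by simp_all
  ultimately show ?thesis unfolding coin_mean_le_def using e_powers
    by (smt (verit) mult_nonneg_nonneg)
qed

lemma v_inverse: "(1 + e) * v = 1"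
  using e_pos unfolding v_def by simp

text \<open>The three inequalities involving \<open>v = 1/(1 + e)\<close> are polynomial ones scaled by a power of \<open>v\<close>.\<close>

lemma coin_zero_margin_zero_reach: "coin_mean_le q a (b * v) theta"
proof -
  have "theta * (1 + e) - (q * (a * (1 + e)) + (1 - q) * b) = e * (1/2 + e/6 - 3*e^2/8 - e^3/24)"
    "theta * (1 + e) - b = e * (1 - e/2 - e^2/8 - e^3/8)"
    by (simp_all add: q_def a_def b_def theta_def field_simps power2_eq_square power3_eq_cube)
  moreover have "0 \<le> 1/2 + e/6 - 3*e^2/8 - e^3/24" "0 \<le> 1 - e/2 - e^2/8 - e^3/8"
    using e_pos e_le_half e_powers by simp_all
  ultimately have "coin_mean_le q (a * (1 + e)) b (theta * (1 + e))"
    unfolding coin_mean_le_def using e_pos by (smt (verit) mult_nonneg_nonneg)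
  from coin_mean_le_scale[OF this, of v] show ?thesis
    using constants_bounds v_inverse by (simp add: mult.assoc)
qed

lemma coin_negative_margin: "coin_mean_le q 1 (v^2) (theta * v)"
proof -
  have "theta * (1 + e) - (q * (1 + e)^2 + (1 - q) * 1) = e^2 * (1/2 + 3*e/8 - e^2/8)"
    "theta * (1 + e) - 1 = e * (1 - e^2/8 - e^3/8)"
    by (simp_all add: q_def theta_def field_simps power2_eq_square power3_eq_cube)
  moreover have "0 \<le> 1/2 + 3*e/8 - e^2/8" "0 \<le> 1 - e^2/8 - e^3/8"
    using e_pos e_le_half e_powers by simp_all
  ultimately have "coin_mean_le q ((1 + e)^2) 1 (theta * (1 + e))"
    unfolding coin_mean_le_def using e_pos e_powers by (smt (verit) mult_nonneg_nonneg)
  then have "coin_mean_le q ((1 + e)^2 * v^2) (1 * v^2) (theta * (1 + e) * v^2)"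
    by (rule coin_mean_le_scale) simp
  moreover have "(1 + e)^2 * v^2 = 1" "theta * (1 + e) * v^2 = theta * v"
    using v_inverse by (simp_all add: power2_eq_square mult.commute mult.left_commute)
  ultimately show ?thesis by (simp only: mult_1_left)
qed

lemma coin_negative_margin_zero_reach: "coin_mean_le q 1 (b * v^2) (theta * v)"
proof -
  have "theta * (1 + e) - (q * (1 + e)^2 + (1 - q) * b) = e^2 * (1/4 + e/8 - e^2/8)"
    "theta * (1 + e) - b = e * (1 - e/2 - e^2/8 - e^3/8)"
    by (simp_all add: q_def b_def theta_def field_simps power2_eq_square power3_eq_cube)
  moreover have "0 \<le> 1/4 + e/8 - e^2/8" "0 \<le> 1 - e/2 - e^2/8 - e^3/8"
    using e_pos e_le_half e_powers by simp_all
  ultimately have "coin_mean_le q ((1 + e)^2) b (theta * (1 + e))"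
    unfolding coin_mean_le_def using e_pos e_powers by (smt (verit) mult_nonneg_nonneg)
  then have "coin_mean_le q ((1 + e)^2 * v^2) (b * v^2) (theta * (1 + e) * v^2)"
    by (rule coin_mean_le_scale) simp
  moreover have "(1 + e)^2 * v^2 = 1" "theta * (1 + e) * v^2 = theta * v"
    using v_inverse by (simp_all add: power2_eq_square mult.commute mult.left_commute)
  ultimately show ?thesis by (simp only: mult_1_left)
qed

fun potential :: "int \<times> int \<Rightarrow> real" where
  "potential (r, m) = (if 0 \<le> m then a ^ nat m else v ^ nat (- m)) * b ^ nat (r - m)"

lemma potential_nonneg: "0 \<le> potential s"
  using constants_bounds by (cases s) simp

lemma one_le_potential:
  assumes "0 \<le> m"
  shows "1 \<le> potential (r, m)"
proof -
  have "1 \<le> a ^ nat m" "1 \<le> b ^ nat (r - m)" using constants_bounds by simp_all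
  then have "1 * 1 \<le> a ^ nat m * b ^ nat (r - m)" by (intro mult_mono) auto
  then show ?thesis using assms by simp
qed

lemma potential_step_positive_margin:
  assumes "1 \<le> m" "m \<le> r"
  shows "coin_mean_le q (potential (margin_step (r, m) True)) (potential (margin_step (r, m) False))
    (theta * potential (r, m))"
proof -
  define k d where "k = nat (m - 1)" and "d = nat (r - m)"
  have m: "m = int k + 1" and r: "r = m + int d" using assms unfolding k_def d_def by simp_all
  define X where "X = a ^ k * b ^ d"
  have "potential (margin_step (r, m) True) = a^2 * X"
    "potential (margin_step (r, m) False) = 1 * X"
    "theta * potential (r, m) = theta * a * X"
    using assms unfolding m r X_def by (simp_all add: rho_step_def nat_add_distrib power_add power2_eq_square)
  then show ?thesis
    by (simp only:)
       (rule coin_mean_le_scale[OF coin_positive_margin], use constants_bounds in \<open>simp add: X_def\<close>)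
qed

lemma potential_step_zero_margin:
  assumes "1 \<le> r"
  shows "coin_mean_le q (potential (margin_step (r, 0) True)) (potential (margin_step (r, 0) False))
    (theta * potential (r, 0))"
proof -
  define d where "d = nat (r - 1)"
  have r: "r = int d + 1" using assms unfolding d_def by simp
  have "potential (margin_step (r, 0) True) = a * b * b ^ d"
    "potential (margin_step (r, 0) False) = 1 * b ^ d"
    "theta * potential (r, 0) = theta * b * b ^ d"
    unfolding r by (simp_all add: rho_step_def nat_add_distrib)
  then show ?thesis
    by (simp only:) (rule coin_mean_le_scale[OF coin_zero_margin], use constants_bounds in simp)
qed

lemma potential_step_zero_margin_zero_reach:
  "coin_mean_le q (potential (margin_step (0, 0) True)) (potential (margin_step (0, 0) False))
    (theta * potential (0, 0))"
  using coin_zero_margin_zero_reach by (simp add: rho_step_def mult.commute)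

lemma potential_step_negative_margin:
  assumes "m \<le> -1" "1 \<le> r"
  shows "coin_mean_le q (potential (margin_step (r, m) True)) (potential (margin_step (r, m) False))
    (theta * potential (r, m))"
proof -
  define k d where "k = nat (- m - 1)" and "d = nat (r - 1)"
  have m: "m = - int k - 1" and r: "r = int d + 1" using assms unfolding k_def d_def by simp_all
  define X where "X = v ^ k * b ^ (d + k + 2)"
  have "potential (margin_step (r, m) True) = 1 * X"
    unfolding X_def m r by (cases k) (simp_all add: rho_step_def nat_add_distrib numeral_eq_Suc)
  moreover have "potential (margin_step (r, m) False) = v^2 * X"
    unfolding X_def m r
    by (simp add: rho_step_def nat_add_distrib power_add power2_eq_square algebra_simps)
  moreover have "theta * potential (r, m) = theta * v * X"
    unfolding X_def m r by (simp add: nat_add_distrib)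
  ultimately show ?thesis
    by (simp only:)
       (rule coin_mean_le_scale[OF coin_negative_margin], use constants_bounds in \<open>simp add: X_def\<close>)
qed

lemma potential_step_negative_margin_zero_reach:
  assumes "m \<le> -1"
  shows "coin_mean_le q (potential (margin_step (0, m) True)) (potential (margin_step (0, m) False))
    (theta * potential (0, m))"
proof -
  define k where "k = nat (- m - 1)"
  have m: "m = - int k - 1" using assms unfolding k_def by simp
  define X where "X = v ^ k * b ^ Suc k"
  have "potential (margin_step (0, m) True) = 1 * X"
    unfolding X_def m by (cases k) (simp_all add: rho_step_def nat_add_distrib)
  moreover have "potential (margin_step (0, m) False) = b * v^2 * X"
    unfolding X_def m by (simp add: rho_step_def nat_add_distrib power2_eq_square)
  moreover have "theta * potential (0, m) = theta * v * X"
    unfolding X_def m by (simp add: nat_add_distrib)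
  ultimately show ?thesis
    by (simp only:)
       (rule coin_mean_le_scale[OF coin_negative_margin_zero_reach],
        use constants_bounds in \<open>simp add: X_def\<close>)
qed

lemma potential_step:
  assumes "0 \<le> r" "m \<le> r"
  shows "coin_mean_le q (potential (margin_step (r, m) True)) (potential (margin_step (r, m) False))
    (theta * potential (r, m))"
proof -
  consider "1 \<le> m" | "m = 0" "1 \<le> r" | "m = 0" "r = 0" | "m \<le> -1" "1 \<le> r" | "m \<le> -1" "r = 0"
    using assms by linarith
  then show ?thesis
    by cases (use assms potential_step_positive_margin potential_step_zero_margin
      potential_step_zero_margin_zero_reach potential_step_negative_margin
      potential_step_negative_margin_zero_reach in auto)
qed

lemma power_rho_step:
  assumes "0 \<le> r"
  shows "coin_mean_le q (a ^ nat (rho_step r True)) (a ^ nat (rho_step r False)) (theta * a ^ nat r + 1)"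
proof (cases "r = 0")
  case True
  have "q * a + (1 - q) \<le> q * (1 + theta) + (1 - q)"
    using constants_bounds by (simp add: mult_left_mono)
  also have "\<dots> \<le> theta + 1" using constants_bounds by (simp add: algebra_simps mult_left_le)
  finally show ?thesis using True constants_bounds unfolding coin_mean_le_def by (simp add: rho_step_def)
next
  case False
  define d where "d = nat (r - 1)"
  have r: "r = int d + 1" using assms False unfolding d_def by simp
  have "coin_mean_le q (a^2 * a ^ d) (1 * a ^ d) (theta * a * a ^ d)"
    by (rule coin_mean_le_scale[OF coin_positive_margin]) (use constants_bounds in simp)
  then show ?thesis
    unfolding coin_mean_le_def r by (simp add: rho_step_def nat_add_distrib power2_eq_square)
qed

end

section \<open>The bound under the martingale condition\<close>

lemma eps_martingale_mono:
  assumes "eps_martingale eps T W" and "e \<le> eps"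
  shows "eps_martingale e T W"
proof -
  have "(1 - eps) / 2 * measure_pmf.prob W A \<le> (1 - e) / 2 * measure_pmf.prob W A" for A
    using assms(2) by (intro mult_right_mono) auto
  then show ?thesis using assms(1) unfolding eps_martingale_def by (meson order_trans)
qed

lemma finite_bool_lists_length: "finite {w :: bool list. length w = n}"
  using finite_lists_length_eq[of "UNIV :: bool set" n] by simp

lemma sum_power_atLeastAtMost_le:
  fixes x :: real
  assumes "0 \<le> x" "x < 1"
  shows "(\<Sum>i=k..n. x ^ i) \<le> x ^ k / (1 - x)"
  using assms by (simp add: sum_gp divide_right_mono)

locale slot_martingale = margin_potential +
  fixes T :: nat and W :: "bool list pmf"
  assumes martingale: "eps_martingale e T W"
begin

lemma set_pmf_W: "set_pmf W \<subseteq> {w. length w = T}"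
  using martingale unfolding eps_martingale_def by blast

lemma prob_martingale:
  "t < T \<Longrightarrow> measure_pmf.prob W {w. take t w = p \<and> w ! t} \<le> q * measure_pmf.prob W {w. take t w = p}"
  using martingale unfolding eps_martingale_def q_def by blast

lemma integrable_W [simp]: "integrable (measure_pmf W) (f :: bool list \<Rightarrow> real)"
  by (rule integrable_measure_pmf_finite) (use finite_subset[OF set_pmf_W finite_bool_lists_length] in simp)

lemma expectation_eq_sum: "measure_pmf.expectation W f = (\<Sum>w | length w = T. f w * pmf W w)"
  using set_pmf_W by (intro integral_measure_pmf_real) (auto simp: finite_bool_lists_length)

lemma prob_eq_sum: "measure_pmf.prob W A = (\<Sum>w | length w = T \<and> w \<in> A. pmf W w)"
proof -
  have "measure_pmf.prob W A = measure_pmf.prob W {w. length w = T \<and> w \<in> A}"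
    using set_pmf_W by (intro measure_eq_AE) (auto simp: AE_measure_pmf_iff)
  also have "\<dots> = (\<Sum>w | length w = T \<and> w \<in> A. pmf W w)"
    by (rule measure_measure_pmf_finite) (rule finite_subset[OF _ finite_bool_lists_length[of T]], auto)
  finally show ?thesis .
qed

lemma expectation_split_prefix:
  fixes f :: "bool list \<Rightarrow> bool \<Rightarrow> real"
  assumes "j \<le> T"
  shows "measure_pmf.expectation W (\<lambda>w. f (take j w) (w ! j)) =
    (\<Sum>p | length p = j. f p True * measure_pmf.prob W {w. take j w = p \<and> w ! j}
                      + f p False * measure_pmf.prob W {w. take j w = p \<and> \<not> w ! j})"
proof -
  let ?A = "\<lambda>p. {w \<in> {w. length w = T}. take j w = p}"
  have "measure_pmf.expectation W (\<lambda>w. f (take j w) (w ! j)) =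
      (\<Sum>p | length p = j. \<Sum>w \<in> ?A p. f (take j w) (w ! j) * pmf W w)"
    unfolding expectation_eq_sum using assms
    by (intro sum.group[symmetric]) (auto simp: finite_bool_lists_length)
  also have "\<dots> = (\<Sum>p | length p = j.
      \<Sum>w \<in> ?A p. if w ! j then f p True * pmf W w else f p False * pmf W w)"
    by (intro sum.cong) auto
  also have "\<dots> = (\<Sum>p | length p = j. f p True * (\<Sum>w \<in> ?A p \<inter> {w. w ! j}. pmf W w)
                      + f p False * (\<Sum>w \<in> ?A p \<inter> - {w. w ! j}. pmf W w))"
  proof (intro sum.cong refl)
    fix p :: "bool list"
    have "finite {w. length w = T \<and> take j w = p}"
      by (rule finite_subset[OF _ finite_bool_lists_length[of T]]) auto
    then show "(\<Sum>w \<in> ?A p. if w ! j then f p True * pmf W w else f p False * pmf W w) =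
        f p True * (\<Sum>w \<in> ?A p \<inter> {w. w ! j}. pmf W w)
        + f p False * (\<Sum>w \<in> ?A p \<inter> - {w. w ! j}. pmf W w)"
      by (simp add: sum.If_cases sum_distrib_left)
  qed
  also have "\<dots> = (\<Sum>p | length p = j. f p True * measure_pmf.prob W {w. take j w = p \<and> w ! j}
                      + f p False * measure_pmf.prob W {w. take j w = p \<and> \<not> w ! j})"
    unfolding prob_eq_sum by (intro sum.cong refl arg_cong2[where f = "(+)"] arg_cong2[where f = "(*)"]
      sum.cong) auto
  finally show ?thesis .
qed

lemma expectation_prefix_step_le:
  assumes "j < T"
    and step: "\<And>p. length p = j \<Longrightarrow> coin_mean_le q (G (p @ [True])) (G (p @ [False])) (H p)"
  shows "measure_pmf.expectation W (\<lambda>w. G (take (Suc j) w))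
    \<le> measure_pmf.expectation W (\<lambda>w. H (take j w))"
proof -
  let ?P1 = "\<lambda>p. measure_pmf.prob W {w. take j w = p \<and> w ! j}"
  let ?P0 = "\<lambda>p. measure_pmf.prob W {w. take j w = p \<and> \<not> w ! j}"
  have "measure_pmf.expectation W (\<lambda>w. G (take (Suc j) w)) =
      measure_pmf.expectation W (\<lambda>w. G (take j w @ [w ! j]))"
    unfolding expectation_eq_sum using assms(1) by (intro sum.cong) (auto simp: take_Suc_conv_app_nth)
  also have "\<dots> = (\<Sum>p | length p = j. G (p @ [True]) * ?P1 p + G (p @ [False]) * ?P0 p)"
    using expectation_split_prefix[of j "\<lambda>p c. G (p @ [c])"] assms(1) by simp
  also have "\<dots> \<le> (\<Sum>p | length p = j. H p * ?P1 p + H p * ?P0 p)"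
  proof (intro sum_mono)
    fix p :: "bool list" assume "p \<in> {p. length p = j}"
    moreover have "?P1 p + ?P0 p = measure_pmf.prob W {w. take j w = p}"
      by (subst measure_pmf.finite_measure_Union[symmetric]) (auto intro: arg_cong[where f = "measure_pmf.prob W"])
    ultimately have "G (p @ [True]) * ?P1 p + G (p @ [False]) * ?P0 p \<le> H p * (?P1 p + ?P0 p)"
      using prob_martingale[OF assms(1), of p] by (intro coin_mean_le_weighted[OF step]) auto
    then show "G (p @ [True]) * ?P1 p + G (p @ [False]) * ?P0 p \<le> H p * ?P1 p + H p * ?P0 p"
      by (simp add: distrib_left)
  qed
  also have "\<dots> = measure_pmf.expectation W (\<lambda>w. H (take j w))"
    using expectation_split_prefix[of j "\<lambda>p c. H p"] assms(1) by simp
  finally show ?thesis .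
qed

lemma expectation_power_rho_le:
  "j \<le> T \<Longrightarrow> measure_pmf.expectation W (\<lambda>w. a ^ nat (rho (take j w))) \<le> 1 / (1 - theta)"
proof (induction j)
  case 0
  then show ?case using constants_bounds by simp
next
  case (Suc j)
  have "measure_pmf.expectation W (\<lambda>w. a ^ nat (rho (take (Suc j) w)))
      \<le> measure_pmf.expectation W (\<lambda>w. theta * a ^ nat (rho (take j w)) + 1)"
    by (rule expectation_prefix_step_le) (use Suc.prems power_rho_step rho_nonneg in auto)
  also have "\<dots> = theta * measure_pmf.expectation W (\<lambda>w. a ^ nat (rho (take j w))) + 1"
    by simp
  also have "\<dots> \<le> theta * (1 / (1 - theta)) + 1"
    using Suc constants_bounds by (intro add_right_mono mult_left_mono) auto
  also have "\<dots> = 1 / (1 - theta)"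
    using constants_bounds by (simp add: field_simps)
  finally show ?case .
qed

lemma expectation_potential_le:
  "s + L \<le> T \<Longrightarrow>
   measure_pmf.expectation W (\<lambda>w. potential (margin_state (take s w) (take L (drop s w))))
     \<le> theta ^ L / (1 - theta)"
proof (induction L)
  case 0
  then show ?case using expectation_power_rho_le[of s] by (simp add: margin_state_def rho_nonneg)
next
  case (Suc L)
  let ?\<Phi> = "\<lambda>p. potential (margin_state (take s p) (drop s p))"
  have restrict: "potential (margin_state (take s w) (take n (drop s w))) = ?\<Phi> (take (s + n) w)" for w n
    by (simp add: take_add min_def)
  have "measure_pmf.expectation W (\<lambda>w. ?\<Phi> (take (Suc (s + L)) w))
      \<le> measure_pmf.expectation W (\<lambda>w. theta * ?\<Phi> (take (s + L) w) + 0)"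
  proof (rule expectation_prefix_step_le)
    fix p :: "bool list" assume p: "length p = s + L"
    let ?s = "(rho p, margin (take s p) (drop s p))"
    have tk: "take s (p @ [c]) = take s p" "drop s (p @ [c]) = drop s p @ [c]" for c
      using p by simp_all
    have st: "margin_state (take s p) (drop s p) = ?s" by (simp add: margin_state_eq)
    have "?\<Phi> p = potential ?s" "?\<Phi> (p @ [c]) = potential (margin_step ?s c)" for c
      by (simp_all only: tk margin_state_snoc st)
    then show "coin_mean_le q (?\<Phi> (p @ [True])) (?\<Phi> (p @ [False])) (theta * ?\<Phi> p + 0)"
      using potential_step[OF rho_nonneg margin_le_rho[of "take s p" "drop s p"]]
      by (simp only: add_0_right append_take_drop_id)
  qed (use Suc.prems in simp)
  also have "\<dots> = theta * measure_pmf.expectation W (\<lambda>w. ?\<Phi> (take (s + L) w))"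
    by (simp only: add_0_right integral_mult_right_zero)
  also have "\<dots> \<le> theta * (theta ^ L / (1 - theta))"
    using Suc.IH[unfolded restrict] Suc.prems constants_bounds by (intro mult_left_mono) simp_all
  finally show ?case using restrict by simp
qed

lemma prob_margin_nonneg_le:
  "measure_pmf.prob W {w. s + L \<le> length w \<and> 0 \<le> margin (take s w) (take L (drop s w))}
   \<le> theta ^ L / (1 - theta)"
proof (cases "s + L \<le> T")
  case False
  then have "{w. s + L \<le> length w \<and> 0 \<le> margin (take s w) (take L (drop s w))} \<inter> set_pmf W = {}"
    using set_pmf_W by auto
  then have "measure_pmf.prob W {w. s + L \<le> length w \<and> 0 \<le> margin (take s w) (take L (drop s w))} = 0"
    by (metis measure_Int_set_pmf measure_empty)
  then show ?thesis using constants_bounds by simp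
next
  case True
  let ?\<Phi> = "\<lambda>w. potential (margin_state (take s w) (take L (drop s w)))"
  have "measure_pmf.prob W {w. s + L \<le> length w \<and> 0 \<le> margin (take s w) (take L (drop s w))}
      \<le> measure_pmf.prob W {w \<in> space (measure_pmf W). 1 \<le> ?\<Phi> w}"
    using one_le_potential
    by (intro measure_pmf.finite_measure_mono) (auto simp: margin_state_eq simp del: potential.simps)
  also have "\<dots> \<le> measure_pmf.expectation W ?\<Phi> / 1"
    by (rule integral_Markov_inequality_measure[where A = "{}"]) (auto simp: potential_nonneg)
  also have "\<dots> \<le> theta ^ L / (1 - theta)"
    using expectation_potential_le True by simp
  finally show ?thesis .
qed

lemma prob_settlement_violation_le:
  "measure_pmf.prob W {w. \<exists>x y z. w = x @ y @ z \<and> length x + 1 = s \<and> length y \<ge> k \<and> mu x y \<ge> 0}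
   \<le> theta ^ k / (1 - theta)^2"
proof -
  let ?E = "{w. \<exists>x y z. w = x @ y @ z \<and> length x + 1 = s \<and> length y \<ge> k \<and> mu x y \<ge> 0}"
  define B where "B L = {w. (s - 1) + L \<le> length w \<and> 0 \<le> margin (take (s - 1) w) (take L (drop (s - 1) w))}"
    for L
  have "?E \<inter> set_pmf W \<subseteq> (\<Union>L\<in>{k..T}. B L)"
  proof
    fix w assume "w \<in> ?E \<inter> set_pmf W"
    then obtain x y z where w: "w = x @ y @ z" "length x + 1 = s" "k \<le> length y" "0 \<le> mu x y"
      and "length w = T" using set_pmf_W by blast
    then have "w \<in> B (length y)" and "length y \<in> {k..T}"
      using mu_le_margin[of x y] unfolding B_def by auto
    then show "w \<in> (\<Union>L\<in>{k..T}. B L)" by blast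
  qed
  then have "measure_pmf.prob W (?E \<inter> set_pmf W) \<le> measure_pmf.prob W (\<Union>L\<in>{k..T}. B L)"
    by (intro measure_pmf.finite_measure_mono) auto
  then have "measure_pmf.prob W ?E \<le> measure_pmf.prob W (\<Union>L\<in>{k..T}. B L)"
    by (simp add: measure_Int_set_pmf)
  also have "\<dots> \<le> (\<Sum>L=k..T. measure_pmf.prob W (B L))"
    by (rule measure_pmf.finite_measure_subadditive_finite) auto
  also have "\<dots> \<le> (\<Sum>L=k..T. theta ^ L) / (1 - theta)"
    unfolding sum_divide_distrib B_def by (intro sum_mono prob_margin_nonneg_le)
  also have "\<dots> \<le> theta ^ k / (1 - theta) / (1 - theta)"
    using constants_bounds by (intro divide_right_mono sum_power_atLeastAtMost_le) auto
  finally show ?thesis by (simp add: power2_eq_square)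
qed

end

theorem corollary1:
  fixes eps :: real
  assumes "0 < eps" and "eps < 1"
  shows "\<exists>C c. C > 0 \<and> c > 0 \<and>
    (\<forall>(T::nat) (s::nat) (k::nat) (W::bool list pmf). eps_martingale eps T W \<longrightarrow>
       measure_pmf.prob W {w. \<exists>x y z. w = x @ y @ z \<and> length x + 1 = s \<and> length y \<ge> k \<and>
                                    mu x y \<ge> 0}
       \<le> C * exp (- c * real k))"
proof -
  define e where "e = min eps (1/2)"
  have e: "0 < e" "e \<le> 1/2" "e \<le> eps" using assms unfolding e_def by auto
  interpret margin_potential e
    using e by unfold_locales
  define C c where "C = 1 / (1 - theta)^2" and "c = - ln theta"
  have power_theta: "theta ^ k = exp (- c * real k)" for k
  proof -
    have "theta ^ k = exp (ln theta) ^ k" using constants_bounds by simp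
    also have "\<dots> = exp (- c * real k)" unfolding c_def exp_of_nat_mult[symmetric] by (simp add: mult.commute)
    finally show ?thesis .
  qed
  have "0 < C" "0 < c" using constants_bounds unfolding C_def c_def by simp_all
  moreover have "measure_pmf.prob W {w. \<exists>x y z. w = x @ y @ z \<and> length x + 1 = s \<and> length y \<ge> k \<and> mu x y \<ge> 0}
      \<le> C * exp (- c * real k)" if "eps_martingale eps T W" for T s k W
  proof -
    interpret slot_martingale e T W
      using e eps_martingale_mono[OF that] by unfold_locales auto
    show ?thesis using prob_settlement_violation_le unfolding C_def power_theta by simp
  qed
  ultimately show ?thesis by blast
qed

end
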